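(* Let $m\ge2$ be even, $n\ge2$, and let $\mathcal{A}$ be a positive semi-definite Hankel tensor of order $m$ and dimension $n$ with Vandermonde decomposition $\mathcal{A}=\sum_{k=1}^r\alpha_k u_k^m$, where $\alpha_k\in\mathbb{R}\setminus\{0\}$ and $u_k=(1,\mu_k,\dots,\mu_k^{n-1})^T$ with pairwise distinct real $\mu_k$. Then: (i) $\alpha_1+\alpha_2+\cdots+\alpha_r\ge0$; (ii) if $r>n$, then the number of indices $k$ with $\alpha_k>0$ is at least $n$; (iii) if $r\le n$, then $\alpha_k>0$ for all $k\in\{1,\dots,r\}$.
   Context: A Hankel tensor of order $m$ and dimension $n$ has entries $a_{i_1\cdots i_m}=v_{i_1+\cdots+i_m-m}$ for some vector $v=(v_0,\dots,v_{(n-1)m})$. For $u\in\mathbb{R}^n$, $u^m$ denotes the rank-one tensor with entries $u_{i_1}\cdots u_{i_m}$. $\mathcal{A}$ is positive semi-definite if $\mathcal{A}x^m=\sum a_{i_1\cdots i_m}x_{i_1}\cdots x_{i_m}\ge0$ for all $x\in\mathbb{R}^n$. *)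

theory Defs
  imports "HOL-Analysis.Analysis"
begin

text \<open>A real tensor of order m and dimension n is modelled as a function on index
lists: A is is the entry a_{i_1...i_m} for is = [i_1,...,i_m], where indices are
0-based (i_j < n). Values outside the index set are irrelevant.\<close>

definition tensor_indices :: "nat \<Rightarrow> nat \<Rightarrow> nat list set" where
  "tensor_indices m n = {is. length is = m \<and> (\<forall>i\<in>set is. i < n)}"

definition hankel_tensor :: "nat \<Rightarrow> nat \<Rightarrow> (nat list \<Rightarrow> real) \<Rightarrow> bool" where
  "hankel_tensor m n A \<longleftrightarrow> (\<exists>v::nat \<Rightarrow> real. \<forall>is\<in>tensor_indices m n. A is = v (sum_list is))"

definition tensor_form :: "nat \<Rightarrow> nat \<Rightarrow> (nat list \<Rightarrow> real) \<Rightarrow> (nat \<Rightarrow> real) \<Rightarrow> real" where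
  "tensor_form m n A x = (\<Sum>is\<in>tensor_indices m n. A is * (\<Prod>j<m. x (is ! j)))"

definition psd_tensor :: "nat \<Rightarrow> nat \<Rightarrow> (nat list \<Rightarrow> real) \<Rightarrow> bool" where
  "psd_tensor m n A \<longleftrightarrow> (\<forall>x::nat \<Rightarrow> real. tensor_form m n A x \<ge> 0)"

definition rank_one_power :: "nat \<Rightarrow> (nat \<Rightarrow> real) \<Rightarrow> nat list \<Rightarrow> real" where
  "rank_one_power m u is = (\<Prod>j<m. u (is ! j))"

definition vandermonde_vec :: "real \<Rightarrow> nat \<Rightarrow> real" where
  "vandermonde_vec \<mu> i = \<mu> ^ i"

end

theory Submission
  imports Defs "HOL-Computational_Algebra.Polynomial"
begin

text \<open>Evaluating the form of A = sum_k alpha_k u_k^m at the coefficient vector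
  of a polynomial p of degree < n gives A x^m = sum_k alpha_k p(mu_k)^m, so positive
  semi-definiteness makes this sum nonnegative for every such p. Taking p = 1 gives (i).
  The polynomial p = prod_{j in S} (t - mu_j) with |S| < n vanishes at the nodes in S and,
  m being even, p(mu_k)^m > 0 at all other nodes; choosing S to be the set of positive
  weights gives (ii), choosing S to be all nodes but one gives (iii).\<close>

lemma tensor_indices_0: "tensor_indices 0 n = {[]}"
  by (auto simp: tensor_indices_def)

lemma tensor_indices_Suc:
  "tensor_indices (Suc m) n = (\<lambda>(i, is). i # is) ` ({..<n} \<times> tensor_indices m n)"
  unfolding tensor_indices_def by (auto simp: length_Suc_conv image_iff)

lemma finite_tensor_indices: "finite (tensor_indices m n)"
  by (induction m) (auto simp: tensor_indices_0 tensor_indices_Suc)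

lemma sum_tensor_indices_prod:
  fixes f :: "nat \<Rightarrow> 'a :: comm_semiring_1"
  shows "(\<Sum>is\<in>tensor_indices m n. \<Prod>j<m. f (is ! j)) = (\<Sum>i<n. f i) ^ m"
proof (induction m)
  case 0
  then show ?case by (simp add: tensor_indices_0)
next
  case (Suc m)
  have inj: "inj_on (\<lambda>(i, is). i # is) ({..<n} \<times> tensor_indices m n)"
    by (auto simp: inj_on_def)
  have "(\<Sum>is\<in>tensor_indices (Suc m) n. \<Prod>j<Suc m. f (is ! j))
      = (\<Sum>(i, is)\<in>{..<n} \<times> tensor_indices m n. f i * (\<Prod>j<m. f (is ! j)))"
    unfolding tensor_indices_Suc sum.reindex[OF inj]
    by (rule sum.cong) (auto simp del: prod.lessThan_Suc simp: prod.lessThan_Suc_shift)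
  also have "\<dots> = (\<Sum>i<n. f i) * (\<Sum>is\<in>tensor_indices m n. \<Prod>j<m. f (is ! j))"
    by (simp add: sum.cartesian_product[symmetric] sum_product)
  finally show ?case using Suc by simp
qed

lemma tensor_form_vandermonde_sum:
  assumes "\<forall>is\<in>tensor_indices m n.
             A is = (\<Sum>k\<in>K. \<alpha> k * rank_one_power m (vandermonde_vec (\<mu> k)) is)"
  shows "tensor_form m n A x = (\<Sum>k\<in>K. \<alpha> k * (\<Sum>i<n. \<mu> k ^ i * x i) ^ m)"
proof -
  have "tensor_form m n A x
      = (\<Sum>is\<in>tensor_indices m n. \<Sum>k\<in>K. \<alpha> k * (\<Prod>j<m. \<mu> k ^ (is ! j) * x (is ! j)))"
    unfolding tensor_form_def
    by (rule sum.cong) (auto simp: assms sum_distrib_right rank_one_power_def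
        vandermonde_vec_def prod.distrib mult.assoc)
  also have "\<dots> = (\<Sum>k\<in>K. \<alpha> k * (\<Sum>is\<in>tensor_indices m n. \<Prod>j<m. \<mu> k ^ (is ! j) * x (is ! j)))"
    by (subst sum.swap) (simp add: sum_distrib_left)
  also have "\<dots> = (\<Sum>k\<in>K. \<alpha> k * (\<Sum>i<n. \<mu> k ^ i * x i) ^ m)"
    by (simp only: sum_tensor_indices_prod[of "\<lambda>i. \<mu> _ ^ i * x i"])
  finally show ?thesis .
qed

lemma poly_eq_sum_lessThan:
  fixes p :: "'a :: comm_semiring_1 poly"
  assumes "degree p < n"
  shows "poly p t = (\<Sum>i<n. t ^ i * coeff p i)"
proof -
  have "poly p t = (\<Sum>i\<le>degree p. coeff p i * t ^ i)"
    by (simp add: poly_altdef)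
  also have "\<dots> = (\<Sum>i<n. coeff p i * t ^ i)"
    by (rule sum.mono_neutral_left) (use assms in \<open>auto simp: coeff_eq_0\<close>)
  finally show ?thesis by (simp add: mult.commute)
qed

lemma psd_vandermonde_sum_poly_nonneg:
  assumes "psd_tensor m n A"
    and "\<forall>is\<in>tensor_indices m n.
           A is = (\<Sum>k\<in>K. \<alpha> k * rank_one_power m (vandermonde_vec (\<mu> k)) is)"
    and "degree p < n"
  shows "0 \<le> (\<Sum>k\<in>K. \<alpha> k * poly p (\<mu> k) ^ m)"
proof -
  have "0 \<le> tensor_form m n A (coeff p)"
    using assms(1) by (simp add: psd_tensor_def)
  then show ?thesis
    by (simp add: tensor_form_vandermonde_sum[OF assms(2)] poly_eq_sum_lessThan[OF assms(3)])
qed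

lemma psd_vandermonde_sum_root_prod_nonneg:
  assumes "psd_tensor m n A"
    and "\<forall>is\<in>tensor_indices m n.
           A is = (\<Sum>k\<in>K. \<alpha> k * rank_one_power m (vandermonde_vec (\<mu> k)) is)"
    and "finite S" and "card S < n"
  shows "0 \<le> (\<Sum>k\<in>K. \<alpha> k * (\<Prod>j\<in>S. \<mu> k - \<mu> j) ^ m)"
proof -
  have "degree (\<Prod>j\<in>S. [:- \<mu> j, 1:]) = card S"
    by (subst degree_prod_eq_sum_degree) auto
  then show ?thesis
    using psd_vandermonde_sum_poly_nonneg[OF assms(1,2), of "\<Prod>j\<in>S. [:- \<mu> j, 1:]"] assms(4)
    by (simp add: poly_prod)
qed

lemma root_prod_power_eq_0:
  fixes \<mu> :: "'a \<Rightarrow> 'b :: comm_ring_1"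
  assumes "finite S" and "k \<in> S" and "m > 0"
  shows "(\<Prod>j\<in>S. \<mu> k - \<mu> j) ^ m = 0"
proof -
  have "(\<Prod>j\<in>S. \<mu> k - \<mu> j) = 0"
    using assms(1,2) by (intro prod_zero) auto
  then show ?thesis
    using assms(3) by (simp add: zero_power)
qed

lemma root_prod_even_power_pos:
  fixes \<mu> :: "'a \<Rightarrow> real"
  assumes "even m" and "inj_on \<mu> K" and "S \<subseteq> K" and "finite S" and "k \<in> K - S"
  shows "(\<Prod>j\<in>S. \<mu> k - \<mu> j) ^ m > 0"
proof -
  have "\<mu> k \<noteq> \<mu> j" if "j \<in> S" for j
    using assms(2,3,5) that by (auto dest: inj_onD)
  then have "(\<Prod>j\<in>S. \<mu> k - \<mu> j) \<noteq> 0"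
    using assms(4) by simp
  then show ?thesis
    using assms(1) by (simp add: zero_less_power_eq)
qed

context
  fixes m n :: nat and K :: "'a set" and \<alpha> :: "'a \<Rightarrow> real" and \<mu> :: "'a \<Rightarrow> real"
  assumes even_m: "even m" and m_pos: "m > 0"
    and finite_K: "finite K"
    and \<alpha>_nonzero: "\<forall>k\<in>K. \<alpha> k \<noteq> 0"
    and inj_\<mu>: "inj_on \<mu> K"
    and root_prod_nonneg:
      "\<And>S. S \<subseteq> K \<Longrightarrow> card S < n \<Longrightarrow> 0 \<le> (\<Sum>k\<in>K. \<alpha> k * (\<Prod>j\<in>S. \<mu> k - \<mu> j) ^ m)"
begin

lemma card_positive_weights_ge:
  assumes "card K \<ge> n"
  shows "card {k\<in>K. \<alpha> k > 0} \<ge> n"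
proof (rule ccontr)
  define S where "S = {k\<in>K. \<alpha> k > 0}"
  assume "\<not> card {k\<in>K. \<alpha> k > 0} \<ge> n"
  then have card_S: "card S < n"
    by (simp add: S_def)
  have S_sub: "S \<subseteq> K" and finite_S: "finite S"
    using finite_K by (auto simp: S_def)
  have negative: "\<alpha> k < 0" if "k \<in> K - S" for k
    using that \<alpha>_nonzero by (force simp: S_def)
  have term_nonpos: "\<alpha> k * (\<Prod>j\<in>S. \<mu> k - \<mu> j) ^ m \<le> 0" if "k \<in> K" for k
  proof (cases "k \<in> S")
    case True
    have "(\<Prod>j\<in>S. \<mu> k - \<mu> j) ^ m = 0"
      by (rule root_prod_power_eq_0[OF finite_S True m_pos])
    then show ?thesis
      by (simp only: mult_zero_right order_refl)
  next
    case False
    have "0 \<le> (\<Prod>j\<in>S. \<mu> k - \<mu> j) ^ m"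
      using even_m by (rule zero_le_even_power)
    then show ?thesis
      using False that negative[of k] by (intro mult_nonpos_nonneg) auto
  qed
  have "S \<noteq> K"
    using card_S assms by auto
  then obtain k0 where k0: "k0 \<in> K - S"
    using S_sub by blast
  have "\<alpha> k0 * (\<Prod>j\<in>S. \<mu> k0 - \<mu> j) ^ m < 0"
    using negative[OF k0] root_prod_even_power_pos[OF even_m inj_\<mu> S_sub finite_S k0]
    by (simp add: mult_neg_pos)
  then have "(\<Sum>k\<in>K. \<alpha> k * (\<Prod>j\<in>S. \<mu> k - \<mu> j) ^ m) < (\<Sum>k\<in>K. 0)"
    using finite_K k0 term_nonpos by (intro sum_strict_mono_ex1) auto
  with root_prod_nonneg[OF S_sub card_S] show False
    by simp
qed

lemma weights_positive:
  assumes "card K \<le> n" and "k \<in> K"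
  shows "\<alpha> k > 0"
proof -
  define S where "S = K - {k}"
  have S_sub: "S \<subseteq> K" and finite_S: "finite S" and k_notin: "k \<in> K - S"
    using finite_K assms(2) by (auto simp: S_def)
  have card_S: "card S < n"
    using assms finite_K card_Diff1_less[of K k] by (simp add: S_def)
  have vanish: "\<alpha> j * (\<Prod>i\<in>S. \<mu> j - \<mu> i) ^ m = 0" if "j \<in> S" for j
  proof -
    have "(\<Prod>i\<in>S. \<mu> j - \<mu> i) ^ m = 0"
      by (rule root_prod_power_eq_0[OF finite_S that m_pos])
    then show ?thesis
      by (simp only: mult_zero_right)
  qed
  have "(\<Sum>j\<in>K. \<alpha> j * (\<Prod>i\<in>S. \<mu> j - \<mu> i) ^ m)
      = \<alpha> k * (\<Prod>i\<in>S. \<mu> k - \<mu> i) ^ m + (\<Sum>j\<in>S. \<alpha> j * (\<Prod>i\<in>S. \<mu> j - \<mu> i) ^ m)"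
    unfolding S_def by (rule sum.remove[OF finite_K assms(2)])
  also have "(\<Sum>j\<in>S. \<alpha> j * (\<Prod>i\<in>S. \<mu> j - \<mu> i) ^ m) = 0"
    using vanish by (intro sum.neutral) blast
  finally have "0 \<le> \<alpha> k * (\<Prod>i\<in>S. \<mu> k - \<mu> i) ^ m"
    using root_prod_nonneg[OF S_sub card_S] by simp
  then have "\<alpha> k \<ge> 0"
    using root_prod_even_power_pos[OF even_m inj_\<mu> S_sub finite_S k_notin]
    by (simp add: zero_le_mult_iff)
  then show ?thesis
    using \<alpha>_nonzero assms(2) by force
qed

end

theorem proposition4p1:
  fixes m n r :: nat and A :: "nat list \<Rightarrow> real"
    and \<alpha> \<mu> :: "nat \<Rightarrow> real"
  assumes "even m" and "m \<ge> 2" and "n \<ge> 2"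
    and "hankel_tensor m n A"
    and "psd_tensor m n A"
    and "\<forall>k\<in>{1..r}. \<alpha> k \<noteq> 0"
    and "inj_on \<mu> {1..r}"
    and "\<forall>is\<in>tensor_indices m n.
           A is = (\<Sum>k=1..r. \<alpha> k * rank_one_power m (vandermonde_vec (\<mu> k)) is)"
  shows "(\<Sum>k=1..r. \<alpha> k) \<ge> 0
         \<and> (r > n \<longrightarrow> card {k\<in>{1..r}. \<alpha> k > 0} \<ge> n)
         \<and> (r \<le> n \<longrightarrow> (\<forall>k\<in>{1..r}. \<alpha> k > 0))"
proof -
  have nonneg: "0 \<le> (\<Sum>k=1..r. \<alpha> k * (\<Prod>j\<in>S. \<mu> k - \<mu> j) ^ m)"
    if "S \<subseteq> {1..r}" and "card S < n" for S
    using psd_vandermonde_sum_root_prod_nonneg[OF assms(5,8)] that finite_subset by blast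
  have "m > 0"
    using assms(2) by simp
  note weights = card_positive_weights_ge[OF assms(1) this _ assms(6,7) nonneg]
    weights_positive[OF assms(1) this _ assms(6,7) nonneg]
  show ?thesis
    using nonneg[of "{}"] assms(3) weights by simp
qed

end
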